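(* Let $(\phi,y)$ be feasible for the joint routing and caching problem (minimize $T(\phi,y)=\sum_{(i,j)\in\mathcal E}D_{ij}(F_{ij})+\sum_i B_i(Y_i)$ subject to $\phi_{ij}(k),y_i(k)\in[0,1]$ and flow conservation), and suppose that for all $i\in\mathcal V,k\in\mathcal C$, with $$\delta_i(k)=\min\Big\{\frac{B_i'(Y_i)}{t_i(k)},\ \min_{j\in\mathcal N(i)}\Big(D'_{ji}(F_{ji})+\frac{\partial T}{\partial r_j(k)}\Big)\Big\}$$ (where $B_i'(Y_i)/t_i(k):=\infty$ if $t_i(k)=0$), we have: $B_i'(Y_i)=t_i(k)\delta_i(k)$ if $y_i(k)>0$ and $B_i'(Y_i)\ge t_i(k)\delta_i(k)$ if $y_i(k)=0$; and for all $j\in\mathcal N(i)$, $D'_{ji}(F_{ji})+\frac{\partial T}{\partial r_j(k)}=\delta_i(k)$ if $\phi_{ij}(k)>0$ and $\ge\delta_i(k)$ if $\phi_{ij}(k)=0$. Then for every feasible $(\phi^\dagger,y^\dagger)$ (with arrival rates $t^\dagger$), $$T(\phi^\dagger,y^\dagger)-T(\phi,y)\ \ge\ \sum_{i\in\mathcal V}\sum_{k\in\mathcal C}\delta_i(k)\big(y_i(k)-y_i^\dagger(k)\big)\big(t_i^\dagger(k)-t_i(k)\big).$$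
   Context: Network model. $\mathcal G=(\mathcal V,\mathcal E)$ is a finite directed graph with $(j,i)\in\mathcal E$ whenever $(i,j)\in\mathcal E$; $\mathcal N(i)=\{j:(i,j)\in\mathcal E\}$. $\mathcal C$ is a finite catalog; item $k$ has nonempty designated server set $\mathcal S_k\subseteq\mathcal V$. Exogenous request rates $r_i(k)\ge0$. Variables: $\phi_{ij}(k)\in[0,1]$ with $\phi_{ij}(k)=0$ if $(i,j)\notin\mathcal E$, and $y_i(k)\in[0,1]$. Flow conservation: $y_i(k)+\sum_{j}\phi_{ij}(k)=1$ if $i\notin\mathcal S_k$ and $=0$ if $i\in\mathcal S_k$. A pair $(\phi,y)$ is feasible if it satisfies these constraints and the arrival rates $t_i(k)$, solving $t_i(k)=r_i(k)+\sum_j t_j(k)\phi_{ji}(k)$, are uniquely determined and nonnegative (e.g. when $\phi$ is loop-free, i.e. for each $k$ the graph with edges $\{(i,j):\phi_{ij}(k)>0\}$ is acyclic). $f_{ji}(k)=t_i(k)\phi_{ij}(k)$, $F_{ij}=\sum_k f_{ij}(k)$, $Y_i=\sum_k y_i(k)$. $D_{ij},B_i$ are continuously differentiable, increasing, convex, zero at $0$. The marginal cost $\frac{\partial T}{\partial r_i(k)}$ satisfies $\frac{\partial T}{\partial r_i(k)}=\sum_{j\in\mathcal N(i)}\phi_{ij}(k)\big(D'_{ji}(F_{ji})+\frac{\partial T}{\partial r_j(k)}\big)$, and equals $0$ if $i\in\mathcal S_k$ or $y_i(k)=1$. *)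

theory Defs
  imports "HOL-Analysis.Analysis"
begin

definition nbrs :: "('v \<times> 'v) set \<Rightarrow> 'v \<Rightarrow> 'v set" where
  "nbrs E i = {j. (i, j) \<in> E}"

definition link_flow :: "'k set \<Rightarrow> ('v \<Rightarrow> 'k \<Rightarrow> real) \<Rightarrow> ('v \<Rightarrow> 'v \<Rightarrow> 'k \<Rightarrow> real)
    \<Rightarrow> 'v \<Rightarrow> 'v \<Rightarrow> real" where
  "link_flow C t phi a b = (\<Sum>k\<in>C. t b k * phi b a k)"

definition cache_total :: "'k set \<Rightarrow> ('v \<Rightarrow> 'k \<Rightarrow> real) \<Rightarrow> 'v \<Rightarrow> real" where
  "cache_total C y i = (\<Sum>k\<in>C. y i k)"

definition total_cost :: "'v set \<Rightarrow> ('v \<times> 'v) set \<Rightarrow> 'k set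
    \<Rightarrow> ('v \<Rightarrow> 'v \<Rightarrow> real \<Rightarrow> real) \<Rightarrow> ('v \<Rightarrow> real \<Rightarrow> real)
    \<Rightarrow> ('v \<Rightarrow> 'k \<Rightarrow> real) \<Rightarrow> ('v \<Rightarrow> 'v \<Rightarrow> 'k \<Rightarrow> real) \<Rightarrow> ('v \<Rightarrow> 'k \<Rightarrow> real) \<Rightarrow> real" where
  "total_cost V E C D B t phi y =
     (\<Sum>(i,j)\<in>E. D i j (link_flow C t phi i j)) + (\<Sum>i\<in>V. B i (cache_total C y i))"

definition solves_arrival :: "'v set \<Rightarrow> ('v \<Rightarrow> 'k \<Rightarrow> real) \<Rightarrow> ('v \<Rightarrow> 'v \<Rightarrow> 'k \<Rightarrow> real)
    \<Rightarrow> 'k \<Rightarrow> ('v \<Rightarrow> real) \<Rightarrow> bool" where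
  "solves_arrival V r phi k s \<longleftrightarrow> (\<forall>i\<in>V. s i = r i k + (\<Sum>j\<in>V. s j * phi j i k))"

definition arrival_rates :: "'v set \<Rightarrow> 'k set \<Rightarrow> ('v \<Rightarrow> 'k \<Rightarrow> real)
    \<Rightarrow> ('v \<Rightarrow> 'v \<Rightarrow> 'k \<Rightarrow> real) \<Rightarrow> ('v \<Rightarrow> 'k \<Rightarrow> real) \<Rightarrow> bool" where
  "arrival_rates V C r phi t \<longleftrightarrow> (\<forall>k\<in>C. solves_arrival V r phi k (\<lambda>i. t i k))"

definition feasible :: "'v set \<Rightarrow> ('v \<times> 'v) set \<Rightarrow> 'k set \<Rightarrow> ('k \<Rightarrow> 'v set)
    \<Rightarrow> ('v \<Rightarrow> 'k \<Rightarrow> real) \<Rightarrow> ('v \<Rightarrow> 'v \<Rightarrow> 'k \<Rightarrow> real) \<Rightarrow> ('v \<Rightarrow> 'k \<Rightarrow> real) \<Rightarrow> bool" where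
  "feasible V E C S r phi y \<longleftrightarrow>
     (\<forall>k\<in>C. \<forall>i j. 0 \<le> phi i j k \<and> phi i j k \<le> 1 \<and> ((i, j) \<notin> E \<longrightarrow> phi i j k = 0)) \<and>
     (\<forall>k\<in>C. \<forall>i\<in>V. 0 \<le> y i k \<and> y i k \<le> 1) \<and>
     (\<forall>k\<in>C. \<forall>i\<in>V. y i k + (\<Sum>j\<in>V. phi i j k) = (if i \<in> S k then 0 else 1)) \<and>
     (\<forall>k\<in>C. (\<exists>s. solves_arrival V r phi k s) \<and>
        (\<forall>s s'. solves_arrival V r phi k s \<longrightarrow> solves_arrival V r phi k s' \<longrightarrow> (\<forall>i\<in>V. s i = s' i)) \<and>
        (\<forall>s. solves_arrival V r phi k s \<longrightarrow> (\<forall>i\<in>V. 0 \<le> s i)))"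

definition delta :: "('v \<times> 'v) set \<Rightarrow> 'k set \<Rightarrow> ('v \<Rightarrow> 'v \<Rightarrow> real \<Rightarrow> real) \<Rightarrow> ('v \<Rightarrow> real \<Rightarrow> real)
    \<Rightarrow> ('v \<Rightarrow> 'k \<Rightarrow> real) \<Rightarrow> ('v \<Rightarrow> 'v \<Rightarrow> 'k \<Rightarrow> real) \<Rightarrow> ('v \<Rightarrow> 'k \<Rightarrow> real)
    \<Rightarrow> ('v \<Rightarrow> 'k \<Rightarrow> real) \<Rightarrow> 'v \<Rightarrow> 'k \<Rightarrow> ereal" where
  "delta E C D' B' t phi y dT i k =
     min (if t i k = 0 then \<infinity> else ereal (B' i (cache_total C y i) / t i k))
         (INF j\<in>nbrs E i. ereal (D' j i (link_flow C t phi j i) + dT j k))"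

end

theory Submission
  imports Defs
begin

text \<open>Convexity of the link and cache costs bounds \<open>T(\<phi>\<dagger>, y\<dagger>) - T(\<phi>, y)\<close> from below by the
  linearization \<open>\<Sum> D'(F)(F\<dagger> - F) + \<Sum> B'(Y)(Y\<dagger> - Y)\<close> at \<open>(\<phi>, y)\<close>. Splitting the link flows by item
  and combining the recursion for \<open>\<partial>T/\<partial>r\<close> with the arrival-rate equations of both strategies
  (which share the exogenous rates), the linearization becomes a sum over nodes and items of
  \<open>t\<dagger>\<^sub>i(k) (\<Sum>\<^sub>j \<phi>\<dagger>\<^sub>i\<^sub>j(k) (D'\<^sub>j\<^sub>i + \<partial>T/\<partial>r\<^sub>j(k)) - \<partial>T/\<partial>r\<^sub>i(k)) + B'\<^sub>i(Y\<^sub>i) (y\<dagger>\<^sub>i(k) - y\<^sub>i(k))\<close>.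
  Each summand is bounded below by \<open>\<delta>\<^sub>i(k) (y\<^sub>i(k) - y\<dagger>\<^sub>i(k)) (t\<dagger>\<^sub>i(k) - t\<^sub>i(k))\<close>: the optimality
  conditions make every marginal cost along a used link equal to \<open>\<delta>\<^sub>i(k)\<close> and along any link at
  least \<open>\<delta>\<^sub>i(k)\<close>, and flow conservation ties \<open>\<Sum>\<^sub>j \<phi>\<^sub>i\<^sub>j(k)\<close> to \<open>y\<^sub>i(k)\<close>.\<close>

lemma convex_on_atLeast_above_tangent_at_left_end:
  fixes f :: "real \<Rightarrow> real"
  assumes convex: "convex_on {a..} f" and deriv: "(f has_real_derivative f') (at a within {a..})"
    and "a \<le> x"
  shows "f' * (x - a) \<le> f x - f a"
proof (cases "x = a")
  case False
  with \<open>a \<le> x\<close> have xa: "a < x" by simp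
  have "((\<lambda>z. (f z - f a) / (z - a)) \<longlongrightarrow> f') (at_right a)"
    using deriv unfolding has_field_derivative_iff by (rule tendsto_mono[rotated]) (intro at_le, auto)
  moreover have "eventually (\<lambda>z. (f z - f a) / (z - a) \<le> (f x - f a) / (x - a)) (at_right a)"
    using eventually_at_right_real[OF xa]
  proof eventually_elim
    fix z assume z: "z \<in> {a<..<x}"
    have "f z \<le> (f x - f a) / (x - a) * (z - a) + f a"
      using z by (intro convex_onD_Icc' convex_on_subset[OF convex]) auto
    then show "(f z - f a) / (z - a) \<le> (f x - f a) / (x - a)"
      using z by (simp add: field_split_simps)
  qed
  ultimately have "f' \<le> (f x - f a) / (x - a)"
    by (simp add: tendsto_upperbound)
  then show ?thesis
    using xa by (simp add: field_simps)
qed simp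

lemma convex_on_atLeast_imp_above_tangent:
  fixes f :: "real \<Rightarrow> real"
  assumes "convex_on {a..} f" and "(f has_real_derivative f') (at c within {a..})"
    and "a \<le> c" and "a \<le> x"
  shows "f' * (x - c) \<le> f x - f c"
proof (cases "c = a")
  case True
  then show ?thesis
    using convex_on_atLeast_above_tangent_at_left_end assms by blast
next
  case False
  then show ?thesis
    using assms by (intro convex_on_imp_above_tangent) auto
qed

lemma INF_ereal_finite_neq_MInf:
  fixes f :: "'a \<Rightarrow> real"
  assumes "finite A"
  shows "(INF j\<in>A. ereal (f j)) \<noteq> -\<infinity>"
proof (cases "A = {}")
  case False
  have "ereal (Min (f ` A)) \<le> (INF j\<in>A. ereal (f j))"
    using assms by (intro INF_greatest) auto
  then show ?thesis
    by auto
qed simp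

lemma arrival_weighted_sum:
  fixes s r d :: "'v \<Rightarrow> real" and q a :: "'v \<Rightarrow> 'v \<Rightarrow> real"
  assumes s: "\<forall>i\<in>V. s i = r i + (\<Sum>j\<in>V. s j * q j i)"
  shows "(\<Sum>i\<in>V. s i * (\<Sum>j\<in>V. q i j * (a j i + d j)))
       = (\<Sum>i\<in>V. \<Sum>j\<in>V. a j i * (s i * q i j)) + (\<Sum>j\<in>V. d j * (s j - r j))"
proof -
  have "(\<Sum>i\<in>V. s i * (\<Sum>j\<in>V. q i j * (a j i + d j)))
      = (\<Sum>i\<in>V. \<Sum>j\<in>V. a j i * (s i * q i j)) + (\<Sum>i\<in>V. \<Sum>j\<in>V. s i * q i j * d j)"
    by (simp add: algebra_simps sum.distrib sum_distrib_left)
  also have "(\<Sum>i\<in>V. \<Sum>j\<in>V. s i * q i j * d j) = (\<Sum>j\<in>V. d j * (\<Sum>i\<in>V. s i * q i j))"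
    by (subst sum.swap) (simp add: sum_distrib_left algebra_simps)
  also have "\<dots> = (\<Sum>j\<in>V. d j * (s j - r j))"
    using s by (intro sum.cong) auto
  finally show ?thesis .
qed

lemma marginal_cost_flow_identity:
  fixes t t2 r d :: "'v \<Rightarrow> real" and p p2 a :: "'v \<Rightarrow> 'v \<Rightarrow> real"
  assumes t: "\<forall>i\<in>V. t i = r i + (\<Sum>j\<in>V. t j * p j i)"
    and t2: "\<forall>i\<in>V. t2 i = r i + (\<Sum>j\<in>V. t2 j * p2 j i)"
    and d: "\<forall>i\<in>V. d i = (\<Sum>j\<in>V. p i j * (a j i + d j))"
  shows "(\<Sum>i\<in>V. \<Sum>j\<in>V. a j i * (t2 i * p2 i j - t i * p i j))
       = (\<Sum>i\<in>V. t2 i * ((\<Sum>j\<in>V. p2 i j * (a j i + d j)) - d i))"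
proof -
  have "(\<Sum>i\<in>V. t i * (\<Sum>j\<in>V. p i j * (a j i + d j))) = (\<Sum>i\<in>V. t i * d i)"
    using d by (intro sum.cong) auto
  \<comment> \<open>The marginal-cost recursion telescopes the link marginals of the old flow down to the
     marginal cost of the injected traffic.\<close>
  then have old: "(\<Sum>i\<in>V. \<Sum>j\<in>V. a j i * (t i * p i j)) = (\<Sum>j\<in>V. d j * r j)"
    using arrival_weighted_sum[OF t, of a d]
    by (simp add: right_diff_distrib sum_subtractf mult.commute)
  have new: "(\<Sum>i\<in>V. t2 i * (\<Sum>j\<in>V. p2 i j * (a j i + d j)))
      = (\<Sum>i\<in>V. \<Sum>j\<in>V. a j i * (t2 i * p2 i j)) + (\<Sum>j\<in>V. t2 j * d j) - (\<Sum>j\<in>V. d j * r j)"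
    using arrival_weighted_sum[OF t2, of a d]
    by (simp add: right_diff_distrib sum_subtractf mult.commute)
  show ?thesis
    using old new by (simp add: right_diff_distrib sum_subtractf)
qed

lemma local_optimality_bound:
  fixes \<delta> :: ereal and p p2 c :: "'v \<Rightarrow> real"
  assumes p_nonneg: "\<And>j. j \<in> N \<Longrightarrow> 0 \<le> p j" and p2_nonneg: "\<And>j. j \<in> N \<Longrightarrow> 0 \<le> p2 j"
    and "0 \<le> t2" and "0 \<le> y" and "0 \<le> y2"
    and p_sum: "sum p N = s - y" and p2_sum: "sum p2 N = s - y2"
    and d: "d = (\<Sum>j\<in>N. p j * c j)"
    and route_pos: "\<And>j. j \<in> N \<Longrightarrow> 0 < p j \<Longrightarrow> ereal (c j) = \<delta>"
    and route_zero: "\<And>j. j \<in> N \<Longrightarrow> p j = 0 \<Longrightarrow> \<delta> \<le> ereal (c j)"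
    and cache_pos: "0 < y \<Longrightarrow> ereal b = ereal t * \<delta>"
    and cache_zero: "y = 0 \<Longrightarrow> ereal t * \<delta> \<le> ereal b"
    and "\<delta> \<noteq> -\<infinity>"
  shows "\<delta> * ereal ((y - y2) * (t2 - t)) \<le> ereal (t2 * ((\<Sum>j\<in>N. p2 j * c j) - d) + b * (y2 - y))"
proof (cases \<delta>)
  case PInf
  \<comment> \<open>Then every link would carry an infinite marginal cost, so there are none, \<open>y = y2\<close>,
     and the left-hand side is \<open>\<infinity> * 0 = 0\<close>.\<close>
  have "N = {}"
  proof (rule ccontr)
    assume "N \<noteq> {}"
    then obtain j where "j \<in> N" by blast
    then show False
      using route_pos route_zero p_nonneg PInf by (cases "p j = 0") (auto simp: less_le)
  qed
  then show ?thesis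
    using p_sum p2_sum d by (simp flip: zero_ereal_def)
next
  case (real e)
  have c_ge: "e \<le> c j" if "j \<in> N" for j
    using route_pos route_zero p_nonneg[OF that] that real by (cases "p j = 0") (auto simp: less_le)
  have "d = (\<Sum>j\<in>N. p j * e)"
    unfolding d using route_pos p_nonneg real
    by (intro sum.cong refl) (fastforce simp: less_le)
  then have d_eq: "d = e * (s - y)"
    using p_sum by (simp add: sum_distrib_left[symmetric] mult.commute)
  have "e * (s - y2) = (\<Sum>j\<in>N. p2 j * e)"
    by (metis p2_sum sum_distrib_right mult.commute)
  also have "\<dots> \<le> (\<Sum>j\<in>N. p2 j * c j)"
    using c_ge p2_nonneg by (intro sum_mono mult_left_mono) auto
  finally have routing: "t2 * (e * (y - y2)) \<le> t2 * ((\<Sum>j\<in>N. p2 j * c j) - d)"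
    using d_eq \<open>0 \<le> t2\<close> by (intro mult_left_mono) (auto simp: algebra_simps)
  have caching: "t * e * (y2 - y) \<le> b * (y2 - y)"
  proof (cases "0 < y")
    case True
    then show ?thesis using cache_pos real by simp
  next
    case False
    then show ?thesis
      using \<open>0 \<le> y\<close> \<open>0 \<le> y2\<close> cache_zero real by (simp add: mult_right_mono)
  qed
  from routing caching show ?thesis
    using real by (simp add: algebra_simps)
qed (use \<open>\<delta> \<noteq> -\<infinity>\<close> in simp)

lemma
  assumes "feasible V E C S r phi y" and "k \<in> C"
  shows feasible_routing_nonneg: "0 \<le> phi i j k"
    and feasible_routing_off_edges: "(i, j) \<notin> E \<Longrightarrow> phi i j k = 0"
    and feasible_caching_nonneg: "i \<in> V \<Longrightarrow> 0 \<le> y i k"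
    and feasible_conservation:
      "i \<in> V \<Longrightarrow> y i k + (\<Sum>j\<in>V. phi i j k) = (if i \<in> S k then 0 else 1)"
  using assms unfolding feasible_def by blast+

lemma feasible_arrival_rates_nonneg:
  assumes "feasible V E C S r phi y" and "arrival_rates V C r phi t" and "k \<in> C" and "i \<in> V"
  shows "0 \<le> t i k"
  using assms unfolding feasible_def arrival_rates_def by blast

lemma feasible_sum_over_nbrs:
  assumes "finite V" and "E \<subseteq> V \<times> V" and "feasible V E C S r phi y" and "k \<in> C"
  shows "(\<Sum>j\<in>V. phi i j k * g j) = (\<Sum>j\<in>nbrs E i. phi i j k * g j)"
  using assms feasible_routing_off_edges[OF assms(3,4)]
  by (intro sum.mono_neutral_right) (auto simp: nbrs_def)

lemma feasible_link_flow_nonneg: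
  assumes "E \<subseteq> V \<times> V" and "feasible V E C S r phi y" and "arrival_rates V C r phi t"
    and "(a, b) \<in> E"
  shows "0 \<le> link_flow C t phi a b"
  unfolding link_flow_def using assms
  by (intro sum_nonneg mult_nonneg_nonneg feasible_arrival_rates_nonneg feasible_routing_nonneg) auto

lemma feasible_cache_total_nonneg:
  assumes "feasible V E C S r phi y" and "i \<in> V"
  shows "0 \<le> cache_total C y i"
  unfolding cache_total_def using assms by (intro sum_nonneg feasible_caching_nonneg)

definition linearized_cost_change ::
  "'v set \<Rightarrow> ('v \<times> 'v) set \<Rightarrow> 'k set \<Rightarrow> ('v \<Rightarrow> 'v \<Rightarrow> real \<Rightarrow> real) \<Rightarrow> ('v \<Rightarrow> real \<Rightarrow> real)
    \<Rightarrow> ('v \<Rightarrow> 'k \<Rightarrow> real) \<Rightarrow> ('v \<Rightarrow> 'v \<Rightarrow> 'k \<Rightarrow> real) \<Rightarrow> ('v \<Rightarrow> 'k \<Rightarrow> real)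
    \<Rightarrow> ('v \<Rightarrow> 'k \<Rightarrow> real) \<Rightarrow> ('v \<Rightarrow> 'v \<Rightarrow> 'k \<Rightarrow> real) \<Rightarrow> ('v \<Rightarrow> 'k \<Rightarrow> real) \<Rightarrow> real" where
  "linearized_cost_change V E C D' B' t phi y t2 phi2 y2 =
     (\<Sum>(a, b)\<in>E. D' a b (link_flow C t phi a b) * (link_flow C t2 phi2 a b - link_flow C t phi a b))
   + (\<Sum>i\<in>V. B' i (cache_total C y i) * (cache_total C y2 i - cache_total C y i))"

lemma total_cost_diff_ge_linearized:
  assumes E_sub: "E \<subseteq> V \<times> V"
    and D_deriv: "\<And>i j x. (i, j) \<in> E \<Longrightarrow> 0 \<le> x \<Longrightarrow>
                    (D i j has_real_derivative D' i j x) (at x within {0..})"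
    and D_convex: "\<And>i j. (i, j) \<in> E \<Longrightarrow> convex_on {0..} (D i j)"
    and B_deriv: "\<And>i x. i \<in> V \<Longrightarrow> 0 \<le> x \<Longrightarrow>
                    (B i has_real_derivative B' i x) (at x within {0..})"
    and B_convex: "\<And>i. i \<in> V \<Longrightarrow> convex_on {0..} (B i)"
    and feas: "feasible V E C S r phi y" and t_rates: "arrival_rates V C r phi t"
    and feas2: "feasible V E C S r phi2 y2" and t2_rates: "arrival_rates V C r phi2 t2"
  shows "linearized_cost_change V E C D' B' t phi y t2 phi2 y2
           \<le> total_cost V E C D B t2 phi2 y2 - total_cost V E C D B t phi y"
proof -
  have "(\<Sum>(a, b)\<in>E. D' a b (link_flow C t phi a b) * (link_flow C t2 phi2 a b - link_flow C t phi a b))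
      \<le> (\<Sum>(a, b)\<in>E. D a b (link_flow C t2 phi2 a b) - D a b (link_flow C t phi a b))"
    using E_sub feas t_rates feas2 t2_rates
    by (intro sum_mono) (auto intro!: convex_on_atLeast_imp_above_tangent D_convex D_deriv
        feasible_link_flow_nonneg)
  moreover have "(\<Sum>i\<in>V. B' i (cache_total C y i) * (cache_total C y2 i - cache_total C y i))
      \<le> (\<Sum>i\<in>V. B i (cache_total C y2 i) - B i (cache_total C y i))"
    using feas feas2
    by (intro sum_mono) (auto intro!: convex_on_atLeast_imp_above_tangent B_convex B_deriv
        feasible_cache_total_nonneg)
  ultimately show ?thesis
    unfolding linearized_cost_change_def total_cost_def by (simp add: case_prod_unfold sum_subtractf)
qed

lemma sum_edges_link_flow_diff:
  assumes finV: "finite V" and E_sub: "E \<subseteq> V \<times> V" and E_sym: "\<And>i j. (i, j) \<in> E \<Longrightarrow> (j, i) \<in> E"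
    and off: "\<And>k i j. k \<in> C \<Longrightarrow> (i, j) \<notin> E \<Longrightarrow> phi i j k = 0"
    and off2: "\<And>k i j. k \<in> C \<Longrightarrow> (i, j) \<notin> E \<Longrightarrow> phi2 i j k = 0"
  shows "(\<Sum>(a, b)\<in>E. w a b * (link_flow C t2 phi2 a b - link_flow C t phi a b))
       = (\<Sum>k\<in>C. \<Sum>i\<in>V. \<Sum>j\<in>V. w j i * (t2 i k * phi2 i j k - t i k * phi i j k))"
proof -
  let ?g = "\<lambda>a b k. w a b * (t2 b k * phi2 b a k - t b k * phi b a k)"
  have "(\<Sum>(a, b)\<in>E. w a b * (link_flow C t2 phi2 a b - link_flow C t phi a b))
      = (\<Sum>(a, b)\<in>E. \<Sum>k\<in>C. ?g a b k)"
    by (simp add: link_flow_def sum_distrib_left flip: sum_subtractf)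
  also have "\<dots> = (\<Sum>(a, b)\<in>V \<times> V. \<Sum>k\<in>C. ?g a b k)"
  proof (intro sum.mono_neutral_left ballI)
    fix x assume x: "x \<in> V \<times> V - E"
    then have "prod.swap x \<notin> E"
      using E_sym by (cases x) auto
    then show "(case x of (a, b) \<Rightarrow> \<Sum>k\<in>C. ?g a b k) = 0"
      using off off2 by (cases x) (simp add: sum.neutral)
  qed (use finV E_sub in auto)
  also have "\<dots> = (\<Sum>a\<in>V. \<Sum>b\<in>V. \<Sum>k\<in>C. ?g a b k)"
    by (rule sum.cartesian_product[symmetric])
  also have "\<dots> = (\<Sum>k\<in>C. \<Sum>b\<in>V. \<Sum>a\<in>V. ?g a b k)"
    by (subst sum.swap) (simp add: sum.swap[of _ C])
  finally show ?thesis .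
qed

lemma linearized_cost_change_eq_sum:
  assumes finV: "finite V" and E_sub: "E \<subseteq> V \<times> V" and E_sym: "\<And>i j. (i, j) \<in> E \<Longrightarrow> (j, i) \<in> E"
    and feas: "feasible V E C S r phi y" and t_rates: "arrival_rates V C r phi t"
    and feas2: "feasible V E C S r phi2 y2" and t2_rates: "arrival_rates V C r phi2 t2"
    and dT_rec: "\<And>i k. i \<in> V \<Longrightarrow> k \<in> C \<Longrightarrow>
        dT i k = (\<Sum>j\<in>nbrs E i. phi i j k * (D' j i (link_flow C t phi j i) + dT j k))"
  shows "linearized_cost_change V E C D' B' t phi y t2 phi2 y2
       = (\<Sum>i\<in>V. \<Sum>k\<in>C.
            t2 i k * ((\<Sum>j\<in>nbrs E i. phi2 i j k * (D' j i (link_flow C t phi j i) + dT j k)) - dT i k)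
          + B' i (cache_total C y i) * (y2 i k - y i k))"
proof -
  let ?F = "link_flow C t phi"
  have routing: "(\<Sum>i\<in>V. \<Sum>j\<in>V. D' j i (?F j i) * (t2 i k * phi2 i j k - t i k * phi i j k))
      = (\<Sum>i\<in>V. t2 i k * ((\<Sum>j\<in>nbrs E i. phi2 i j k * (D' j i (?F j i) + dT j k)) - dT i k))"
    if k: "k \<in> C" for k
  proof -
    have "\<forall>i\<in>V. dT i k = (\<Sum>j\<in>V. phi i j k * (D' j i (?F j i) + dT j k))"
      using dT_rec[OF _ k] unfolding feasible_sum_over_nbrs[OF finV E_sub feas k] by blast
    with t_rates t2_rates k
    have "(\<Sum>i\<in>V. \<Sum>j\<in>V. D' j i (?F j i) * (t2 i k * phi2 i j k - t i k * phi i j k))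
        = (\<Sum>i\<in>V. t2 i k * ((\<Sum>j\<in>V. phi2 i j k * (D' j i (?F j i) + dT j k)) - dT i k))"
      unfolding arrival_rates_def solves_arrival_def by (intro marginal_cost_flow_identity) auto
    then show ?thesis
      by (simp add: feasible_sum_over_nbrs[OF finV E_sub feas2 k])
  qed
  have caching: "(\<Sum>i\<in>V. B' i (cache_total C y i) * (cache_total C y2 i - cache_total C y i))
      = (\<Sum>i\<in>V. \<Sum>k\<in>C. B' i (cache_total C y i) * (y2 i k - y i k))"
    by (simp add: cache_total_def sum_distrib_left flip: sum_subtractf)
  have edges: "(\<Sum>(a, b)\<in>E. D' a b (?F a b) * (link_flow C t2 phi2 a b - ?F a b))
      = (\<Sum>k\<in>C. \<Sum>i\<in>V. \<Sum>j\<in>V. D' j i (?F j i) * (t2 i k * phi2 i j k - t i k * phi i j k))"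
    using feasible_routing_off_edges[OF feas] feasible_routing_off_edges[OF feas2]
    by (intro sum_edges_link_flow_diff[OF finV E_sub E_sym]) blast+
  show ?thesis
    unfolding linearized_cost_change_def caching edges
    by (simp add: routing sum.distrib sum.swap[of _ C])
qed

lemma feasible_local_optimality_bound:
  assumes finV: "finite V" and E_sub: "E \<subseteq> V \<times> V"
    and feas: "feasible V E C S r phi y"
    and feas2: "feasible V E C S r phi2 y2" and t2_rates: "arrival_rates V C r phi2 t2"
    and i: "i \<in> V" and k: "k \<in> C"
    and dT_rec: "dT i k = (\<Sum>j\<in>nbrs E i. phi i j k * (D' j i (link_flow C t phi j i) + dT j k))"
    and cache_pos: "y i k > 0 \<Longrightarrow>
        ereal (B' i (cache_total C y i)) = ereal (t i k) * delta E C D' B' t phi y dT i k"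
    and cache_zero: "y i k = 0 \<Longrightarrow>
        ereal (B' i (cache_total C y i)) \<ge> ereal (t i k) * delta E C D' B' t phi y dT i k"
    and route_pos: "\<And>j. j \<in> nbrs E i \<Longrightarrow> phi i j k > 0 \<Longrightarrow>
        ereal (D' j i (link_flow C t phi j i) + dT j k) = delta E C D' B' t phi y dT i k"
    and route_zero: "\<And>j. j \<in> nbrs E i \<Longrightarrow> phi i j k = 0 \<Longrightarrow>
        ereal (D' j i (link_flow C t phi j i) + dT j k) \<ge> delta E C D' B' t phi y dT i k"
  shows "delta E C D' B' t phi y dT i k * ereal ((y i k - y2 i k) * (t2 i k - t i k))
    \<le> ereal (t2 i k * ((\<Sum>j\<in>nbrs E i. phi2 i j k * (D' j i (link_flow C t phi j i) + dT j k)) - dT i k)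
             + B' i (cache_total C y i) * (y2 i k - y i k))"
proof (rule local_optimality_bound[where s = "if i \<in> S k then 0 else 1"])
  have nbrs_sub: "nbrs E i \<subseteq> V"
    using E_sub by (auto simp: nbrs_def)
  show "(\<Sum>j\<in>nbrs E i. phi i j k) = (if i \<in> S k then 0 else 1) - y i k"
    using feasible_conservation[OF feas k i] feasible_sum_over_nbrs[OF finV E_sub feas k, of i "\<lambda>_. 1"]
    by simp
  show "(\<Sum>j\<in>nbrs E i. phi2 i j k) = (if i \<in> S k then 0 else 1) - y2 i k"
    using feasible_conservation[OF feas2 k i] feasible_sum_over_nbrs[OF finV E_sub feas2 k, of i "\<lambda>_. 1"]
    by simp
  show "delta E C D' B' t phi y dT i k \<noteq> -\<infinity>"
    using INF_ereal_finite_neq_MInf[OF finite_subset[OF nbrs_sub finV]]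
    unfolding delta_def by (auto simp: min_def)
qed (use feasible_routing_nonneg[OF feas k] feasible_routing_nonneg[OF feas2 k]
      feasible_caching_nonneg[OF feas k i] feasible_caching_nonneg[OF feas2 k i]
      feasible_arrival_rates_nonneg[OF feas2 t2_rates k i] dT_rec cache_pos cache_zero
      route_pos route_zero in auto)

theorem theorem3:
  fixes V :: "'v set" and E :: "('v \<times> 'v) set" and C :: "'k set"
    and S :: "'k \<Rightarrow> 'v set" and r :: "'v \<Rightarrow> 'k \<Rightarrow> real"
    and D D' :: "'v \<Rightarrow> 'v \<Rightarrow> real \<Rightarrow> real" and B B' :: "'v \<Rightarrow> real \<Rightarrow> real"
    and phi phi2 :: "'v \<Rightarrow> 'v \<Rightarrow> 'k \<Rightarrow> real" and y y2 t t2 dT :: "'v \<Rightarrow> 'k \<Rightarrow> real"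
  assumes finV: "finite V" and finC: "finite C"
    and E_sub: "E \<subseteq> V \<times> V" and E_sym: "\<And>i j. (i, j) \<in> E \<Longrightarrow> (j, i) \<in> E"
    and S_ok: "\<And>k. k \<in> C \<Longrightarrow> S k \<noteq> {} \<and> S k \<subseteq> V"
    and r_nonneg: "\<And>i k. i \<in> V \<Longrightarrow> k \<in> C \<Longrightarrow> 0 \<le> r i k"
    and D_deriv: "\<And>i j x. (i, j) \<in> E \<Longrightarrow> 0 \<le> x \<Longrightarrow>
                    (D i j has_real_derivative D' i j x) (at x within {0..})"
    and D'_cont: "\<And>i j. (i, j) \<in> E \<Longrightarrow> continuous_on {0..} (D' i j)"
    and D_mono: "\<And>i j. (i, j) \<in> E \<Longrightarrow> mono_on {0..} (D i j)"
    and D_convex: "\<And>i j. (i, j) \<in> E \<Longrightarrow> convex_on {0..} (D i j)"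
    and D_zero: "\<And>i j. (i, j) \<in> E \<Longrightarrow> D i j 0 = 0"
    and B_deriv: "\<And>i x. i \<in> V \<Longrightarrow> 0 \<le> x \<Longrightarrow>
                    (B i has_real_derivative B' i x) (at x within {0..})"
    and B'_cont: "\<And>i. i \<in> V \<Longrightarrow> continuous_on {0..} (B' i)"
    and B_mono: "\<And>i. i \<in> V \<Longrightarrow> mono_on {0..} (B i)"
    and B_convex: "\<And>i. i \<in> V \<Longrightarrow> convex_on {0..} (B i)"
    and B_zero: "\<And>i. i \<in> V \<Longrightarrow> B i 0 = 0"
    and feas: "feasible V E C S r phi y" and t_rates: "arrival_rates V C r phi t"
    and dT_rec: "\<And>i k. i \<in> V \<Longrightarrow> k \<in> C \<Longrightarrow>
        dT i k = (\<Sum>j\<in>nbrs E i. phi i j k * (D' j i (link_flow C t phi j i) + dT j k))"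
    and dT_zero: "\<And>i k. i \<in> V \<Longrightarrow> k \<in> C \<Longrightarrow> i \<in> S k \<or> y i k = 1 \<Longrightarrow> dT i k = 0"
    and cache_pos: "\<And>i k. i \<in> V \<Longrightarrow> k \<in> C \<Longrightarrow> y i k > 0 \<Longrightarrow>
        ereal (B' i (cache_total C y i)) = ereal (t i k) * delta E C D' B' t phi y dT i k"
    and cache_zero: "\<And>i k. i \<in> V \<Longrightarrow> k \<in> C \<Longrightarrow> y i k = 0 \<Longrightarrow>
        ereal (B' i (cache_total C y i)) \<ge> ereal (t i k) * delta E C D' B' t phi y dT i k"
    and route_pos: "\<And>i k j. i \<in> V \<Longrightarrow> k \<in> C \<Longrightarrow> j \<in> nbrs E i \<Longrightarrow> phi i j k > 0 \<Longrightarrow>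
        ereal (D' j i (link_flow C t phi j i) + dT j k) = delta E C D' B' t phi y dT i k"
    and route_zero: "\<And>i k j. i \<in> V \<Longrightarrow> k \<in> C \<Longrightarrow> j \<in> nbrs E i \<Longrightarrow> phi i j k = 0 \<Longrightarrow>
        ereal (D' j i (link_flow C t phi j i) + dT j k) \<ge> delta E C D' B' t phi y dT i k"
    and feas2: "feasible V E C S r phi2 y2" and t2_rates: "arrival_rates V C r phi2 t2"
  shows "ereal (total_cost V E C D B t2 phi2 y2 - total_cost V E C D B t phi y)
           \<ge> (\<Sum>i\<in>V. \<Sum>k\<in>C. delta E C D' B' t phi y dT i k
                               * ereal ((y i k - y2 i k) * (t2 i k - t i k)))"
proof -
  let ?\<delta> = "delta E C D' B' t phi y dT"
  let ?Q = "\<lambda>i k. t2 i k * ((\<Sum>j\<in>nbrs E i. phi2 i j k * (D' j i (link_flow C t phi j i) + dT j k)) - dT i k)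
                + B' i (cache_total C y i) * (y2 i k - y i k)"
  have "(\<Sum>i\<in>V. \<Sum>k\<in>C. ?\<delta> i k * ereal ((y i k - y2 i k) * (t2 i k - t i k)))
      \<le> (\<Sum>i\<in>V. \<Sum>k\<in>C. ereal (?Q i k))"
    by (intro sum_mono feasible_local_optimality_bound[OF finV E_sub feas feas2 t2_rates]
        dT_rec cache_pos cache_zero route_pos route_zero)
  also have "\<dots> = ereal (linearized_cost_change V E C D' B' t phi y t2 phi2 y2)"
    by (simp add: linearized_cost_change_eq_sum[where D' = D' and dT = dT,
          OF finV E_sub E_sym feas t_rates feas2 t2_rates dT_rec])
  also have "\<dots> \<le> ereal (total_cost V E C D B t2 phi2 y2 - total_cost V E C D B t phi y)"
    using total_cost_diff_ge_linearized[OF E_sub D_deriv D_convex B_deriv B_convex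
        feas t_rates feas2 t2_rates] by simp
  finally show ?thesis .
qed

end
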